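(* Let $k\ge 2$. For every $n\ge 2k$ there are weighted $k$-uniform hypergraphs $w_1,\ldots,w_k:[n]^{(k)}\to\mathbb{R}$ such that, for every $i$, $w_i([n])=0$ and $\|w_i\|_1=\binom nk$, and such that for all $1\le i<j\le k$ we have $$\operatorname{disc}(w_i,w_j)=0.$$
   Context: $[n]=\{1,\ldots,n\}$ and $V^{(k)}$ denotes the family of $k$-element subsets of $V$. A weighted $k$-uniform hypergraph on $V$ is a function $w:V^{(k)}\to\mathbb{R}$; $w(S)=\sum_{e\in S^{(k)}}w(e)$ for $S\subseteq V$, $\|w\|_1=\sum_{e}|w(e)|$, $\langle w,u\rangle=\sum_{e\in V^{(k)}}w(e)u(e)$, and the density is $d(w)=w(V)/\binom{|V|}{k}$. For a permutation $\pi$ of $V$, $w_\pi(e)=w(\pi^{-1}(e))$. With $n=|V|$, $\operatorname{disc}^+(w,u)=\max_\pi\langle w_\pi,u\rangle-d(w)d(u)\binom nk$, $\operatorname{disc}^-(w,u)=d(w)d(u)\binom nk-\min_\pi\langle w_\pi,u\rangle$ (maxima/minima over all permutations $\pi$ of $V$), and $\operatorname{disc}(w,u)=\max\{\operatorname{disc}^+(w,u),\operatorname{disc}^-(w,u)\}=\max_\pi|\langle w_\pi,u\rangle-d(w)d(u)\binom nk|$. *)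

theory Defs
  imports "HOL-Analysis.Analysis" "HOL-Combinatorics.Permutations"
begin

text \<open>A weighted k-uniform hypergraph on a finite vertex set V is a function
  on k-element subsets of V; we represent it as a function on all sets, only
  its values on the k-subsets of V matter.\<close>

definition ksubsets :: "'a set \<Rightarrow> nat \<Rightarrow> 'a set set" where
  "ksubsets V k = {e. e \<subseteq> V \<and> card e = k}"

definition wtot :: "'a set \<Rightarrow> nat \<Rightarrow> ('a set \<Rightarrow> real) \<Rightarrow> real" where
  "wtot V k w = (\<Sum>e\<in>ksubsets V k. w e)"

definition l1norm :: "'a set \<Rightarrow> nat \<Rightarrow> ('a set \<Rightarrow> real) \<Rightarrow> real" where
  "l1norm V k w = (\<Sum>e\<in>ksubsets V k. \<bar>w e\<bar>)"

definition hinner :: "'a set \<Rightarrow> nat \<Rightarrow> ('a set \<Rightarrow> real) \<Rightarrow> ('a set \<Rightarrow> real) \<Rightarrow> real" where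
  "hinner V k w u = (\<Sum>e\<in>ksubsets V k. w e * u e)"

definition density :: "'a set \<Rightarrow> nat \<Rightarrow> ('a set \<Rightarrow> real) \<Rightarrow> real" where
  "density V k w = wtot V k w / real (card V choose k)"

definition permute_hg :: "('a \<Rightarrow> 'a) \<Rightarrow> ('a set \<Rightarrow> real) \<Rightarrow> ('a set \<Rightarrow> real)" where
  "permute_hg \<pi> w = (\<lambda>e. w (inv \<pi> ` e))"

definition disc :: "'a set \<Rightarrow> nat \<Rightarrow> ('a set \<Rightarrow> real) \<Rightarrow> ('a set \<Rightarrow> real) \<Rightarrow> real" where
  "disc V k w u = Max ((\<lambda>\<pi>. \<bar>hinner V k (permute_hg \<pi> w) u
      - density V k w * density V k u * real (card V choose k)\<bar>) ` {\<pi>. \<pi> permutes V})"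

end

theory Submission
  imports Defs
begin

text \<open>For \<open>i \<le> k\<close> let \<open>w\<^sub>i(e) = \<Prod>\<^sub>t\<^sub>\<le>\<^sub>i (1[2t-1 \<in> e] - 1[2t \<in> e])\<close>, suitably rescaled.
  A permuted copy of \<open>w\<^sub>i\<close> is again a product of \<open>i\<close> differences of vertex indicators;
  expanding that product writes \<open>\<langle>(w\<^sub>i)\<^sub>\<pi>, w\<^sub>j\<rangle>\<close> as a signed combination of sums of \<open>w\<^sub>j\<close>
  over the edges containing a set \<open>T\<close> of at most \<open>i < j\<close> vertices. Some pair
  \<open>{2t-1, 2t}\<close> with \<open>t \<le> j\<close> avoids \<open>T\<close>, and swapping its two vertices is a bijection on
  these edges that changes the sign of \<open>w\<^sub>j\<close>, so each of these sums vanishes. Hence every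
  permuted inner product is \<open>0\<close>, and since \<open>w\<^sub>i\<close> has density \<open>0\<close> the discrepancy is \<open>0\<close>.\<close>

definition vertex_diff :: "'a \<Rightarrow> 'a \<Rightarrow> 'a set \<Rightarrow> real" where
  "vertex_diff x y e = of_bool (x \<in> e) - of_bool (y \<in> e)"

definition pair_product :: "nat \<Rightarrow> nat set \<Rightarrow> real" where
  "pair_product j e = (\<Prod>t\<in>{1..j}. vertex_diff (2*t-1) (2*t) e)"

lemma finite_ksubsets: "finite V \<Longrightarrow> finite (ksubsets V k)"
  unfolding ksubsets_def by (rule finite_subset[of _ "Pow V"]) auto

lemma ex_pair_disjoint:
  assumes "finite T" "card T < j"
  shows "\<exists>t\<in>{1..j}. 2*t-1 \<notin> T \<and> 2*t \<notin> T"
proof (rule ccontr)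
  assume "\<not> ?thesis"
  then have "{1..j} \<subseteq> (\<lambda>x. (x+1) div 2) ` T"
    by (force intro: rev_image_eqI)
  then have "card {1..j} \<le> card ((\<lambda>x. (x+1) div 2) ` T)"
    using assms by (intro card_mono) auto
  also have "\<dots> \<le> card T"
    using assms(1) by (rule card_image_le)
  finally show False
    using assms by simp
qed

lemma sum_supersets_pair_product_eq_0:
  assumes "finite T" "card T < j" "2*j \<le> n"
  shows "(\<Sum>e\<in>ksubsets {1..n} k. if T \<subseteq> e then pair_product j e else 0) = 0"
proof -
  obtain t where t: "t \<in> {1..j}" "2*t-1 \<notin> T" "2*t \<notin> T"
    using ex_pair_disjoint[OF assms(1,2)] by blast
  define s where "s = Transposition.transpose (2*t-1) (2*t)"
  define A where "A = ksubsets {1..n} k"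
  define f where "f e = (if T \<subseteq> e then pair_product j e else 0)" for e
  have s_mem: "x \<in> s ` e \<longleftrightarrow> s x \<in> e" for x e
    unfolding s_def by (rule in_transpose_image_iff)
  have s_s: "s ` s ` e = e" for e
    by (simp add: s_def image_image)
  have s_ksubsets: "s ` e \<in> A" if "e \<in> A" for e
  proof -
    have "s ` {1..n} = {1..n}"
      unfolding s_def using t assms by (intro transpose_image_eq) auto
    then show ?thesis
      using that inj_on_subset[OF inj_transpose]
      by (auto simp: A_def ksubsets_def s_def card_image)
  qed
  have "s x = x" if "x \<in> T" for x
    unfolding s_def using that t by (metis transpose_apply_other)
  then have s_T: "T \<subseteq> s ` e \<longleftrightarrow> T \<subseteq> e" for e
    using s_mem by (metis subset_iff)
  have s_pair_product: "pair_product j (s ` e) = - pair_product j e" for e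
  proof -
    have other: "vertex_diff (2*u-1) (2*u) (s ` e) = vertex_diff (2*u-1) (2*u) e"
      if "u \<in> {1..j} - {t}" for u
    proof -
      have "s (2*u-1) = 2*u-1" "s (2*u) = 2*u"
        unfolding s_def using that t by auto
      then show ?thesis
        by (simp add: vertex_diff_def s_mem)
    qed
    have swapped: "vertex_diff (2*t-1) (2*t) (s ` e) = - vertex_diff (2*t-1) (2*t) e"
    proof -
      have "s (2*t-1) = 2*t" "s (2*t) = 2*t-1"
        unfolding s_def by auto
      then show ?thesis
        by (simp add: vertex_diff_def s_mem)
    qed
    show ?thesis
      unfolding pair_product_def prod.remove[OF finite_atLeastAtMost t(1)]
      using other swapped by (simp add: prod.cong[OF refl other])
  qed
  have "sum f A = sum (\<lambda>e. - f e) A"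
    by (rule sum.reindex_bij_witness[where i="(`) s" and j="(`) s"])
       (auto simp: s_s s_ksubsets f_def s_T s_pair_product)
  then show ?thesis
    unfolding f_def A_def by (simp add: sum_negf)
qed

text \<open>Expanding the product over \<open>I\<close> one factor at a time enlarges the required vertex
  set \<open>T\<close> by one vertex per factor.\<close>

lemma sum_vertex_diffs_pair_product_eq_0:
  assumes "finite I" "finite T" "card I + card T < j" "2*j \<le> n"
  shows "(\<Sum>e\<in>ksubsets {1..n} k.
           if T \<subseteq> e then (\<Prod>t\<in>I. vertex_diff (x t) (y t) e) * pair_product j e else 0) = 0"
  using assms
proof (induction I arbitrary: T rule: finite_induct)
  case empty
  then show ?case
    unfolding prod.empty mult_1 using sum_supersets_pair_product_eq_0 by simp
next
  case (insert u F)
  let ?Q = "\<lambda>e. (\<Prod>t\<in>F. vertex_diff (x t) (y t) e) * pair_product j e"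
  let ?S = "\<lambda>T'. \<Sum>e\<in>ksubsets {1..n} k. if T' \<subseteq> e then ?Q e else 0"
  have split: "(if T \<subseteq> e then (\<Prod>t\<in>insert u F. vertex_diff (x t) (y t) e) * pair_product j e else 0)
      = (if insert (x u) T \<subseteq> e then ?Q e else 0) - (if insert (y u) T \<subseteq> e then ?Q e else 0)" for e
    using insert.hyps by (simp add: vertex_diff_def algebra_simps)
  have "card F + card (insert z T) < j" for z
    using insert.prems insert.hyps by (auto simp: card_insert_if)
  then have "?S (insert z T) = 0" for z
    using insert.prems by (intro insert.IH) auto
  then show ?case
    by (simp add: split sum_subtractf)
qed

lemma l1norm_pair_product_pos:
  assumes "i \<le> k" "2*k \<le> n"
  shows "l1norm {1..n} k (pair_product i) > 0"
proof -
  define e where "e = (\<lambda>t. 2*t-1) ` {1..i} \<union> {2*i+1..k+i}"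
  have "inj_on (\<lambda>t::nat. 2*t-1) {1..i}"
    by (auto simp: inj_on_def)
  moreover have "(\<lambda>t. 2*t-1) ` {1..i} \<inter> {2*i+1..k+i} = {}"
    by auto
  ultimately have "card e = k"
    unfolding e_def using assms by (simp add: card_Un_disjoint card_image)
  moreover have "e \<subseteq> {1..n}"
    unfolding e_def using assms by auto
  ultimately have e_ksubset: "e \<in> ksubsets {1..n} k"
    by (simp add: ksubsets_def)
  have "2*t-1 \<in> e" "2*t \<notin> e" if "t \<in> {1..i}" for t
    using that unfolding e_def by (auto, presburger+)
  then have "pair_product i e = 1"
    by (simp add: pair_product_def vertex_diff_def)
  then have "1 \<le> l1norm {1..n} k (pair_product i)"
    unfolding l1norm_def
    using member_le_sum[of e _ "\<lambda>e. \<bar>pair_product i e\<bar>"] e_ksubset finite_ksubsets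
    by fastforce
  then show ?thesis
    by simp
qed

lemma permute_hg_pair_product:
  assumes "\<pi> permutes V"
  shows "permute_hg \<pi> (pair_product i) e
           = (\<Prod>t\<in>{1..i}. vertex_diff (\<pi> (2*t-1)) (\<pi> (2*t)) e)"
proof -
  have "inv \<pi> ` e = \<pi> -` e"
    using bij_vimage_eq_inv_image[OF permutes_bij[OF assms]] by simp
  then show ?thesis
    by (simp add: permute_hg_def pair_product_def vertex_diff_def)
qed

lemma disc_eq_0_if_orthogonal_permutations:
  assumes "wtot V k w = 0" "\<And>\<pi>. \<pi> permutes V \<Longrightarrow> hinner V k (permute_hg \<pi> w) u = 0"
  shows "disc V k w u = 0"
proof -
  have "density V k w = 0"
    using assms(1) by (simp add: density_def)
  then have "(\<lambda>\<pi>. \<bar>hinner V k (permute_hg \<pi> w) u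
      - density V k w * density V k u * real (card V choose k)\<bar>) ` {\<pi>. \<pi> permutes V}
      = (\<lambda>_. 0) ` {\<pi>. \<pi> permutes V}"
    using assms(2) by (intro image_cong) auto
  moreover have "{\<pi>. \<pi> permutes V} \<noteq> {}"
    using permutes_id by blast
  ultimately show ?thesis
    unfolding disc_def by (simp only: image_constant_conv if_False Max_singleton)
qed

lemma hinner_permute_pair_product_eq_0:
  assumes "\<pi> permutes {1..n}" "i < j" "2*j \<le> n"
  shows "hinner {1..n} k (permute_hg \<pi> (pair_product i)) (pair_product j) = 0"
  using sum_vertex_diffs_pair_product_eq_0[where I="{1..i}" and T="{}"
      and x="\<lambda>t. \<pi> (2*t-1)" and y="\<lambda>t. \<pi> (2*t)"] assms
  by (simp add: hinner_def permute_hg_pair_product[OF assms(1)])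

theorem theorem1p1:
  fixes k n :: nat
  assumes "k \<ge> 2" and "n \<ge> 2 * k"
  shows "\<exists>w :: nat \<Rightarrow> nat set \<Rightarrow> real.
           (\<forall>i\<in>{1..k}. wtot {1..n} k (w i) = 0 \<and>
                          l1norm {1..n} k (w i) = real (n choose k)) \<and>
           (\<forall>i j. 1 \<le> i \<and> i < j \<and> j \<le> k \<longrightarrow> disc {1..n} k (w i) (w j) = 0)"
proof -
  define c where "c i = real (n choose k) / l1norm {1..n} k (pair_product i)" for i
  define w where "w i e = c i * pair_product i e" for i e
  have wtot: "wtot {1..n} k (w i) = 0" if "1 \<le> i" "i \<le> k" for i
    using sum_supersets_pair_product_eq_0[of "{}" i n k] that assms
    by (simp add: wtot_def w_def flip: sum_distrib_left)
  have l1norm: "l1norm {1..n} k (w i) = real (n choose k)" if "i \<le> k" for i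
  proof -
    have "l1norm {1..n} k (w i) = \<bar>c i\<bar> * l1norm {1..n} k (pair_product i)"
      by (simp add: l1norm_def w_def abs_mult sum_distrib_left)
    then show ?thesis
      using l1norm_pair_product_pos[OF that assms(2)] by (simp add: c_def)
  qed
  have "hinner {1..n} k (permute_hg \<pi> (w i)) (w j) = 0"
    if "\<pi> permutes {1..n}" "i < j" "j \<le> k" for \<pi> i j
    using hinner_permute_pair_product_eq_0[OF that(1,2), where k=k] that assms
    by (simp add: hinner_def permute_hg_def w_def algebra_simps flip: sum_distrib_left)
  then have "disc {1..n} k (w i) (w j) = 0" if "1 \<le> i" "i < j" "j \<le> k" for i j
    using that by (intro disc_eq_0_if_orthogonal_permutations wtot) auto
  then show ?thesis
    using wtot l1norm by (intro exI[of _ w]) auto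
qed

end
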